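(* Fix $1<p,q<\infty$ with $\frac1p+\frac1q=1$ and an integer $r>1$; let $s=r^{1/p}$, $M=\lfloor\log_2 r\rfloor$ and let $\alpha>0$ satisfy $\alpha^M=s$. Let $(x_n)_n\subseteq\mathcal N_\alpha$ be a block sequence such that $\alpha^{-3}\le\|J_mx_n\|_p\le 1$ for all $n,m\in\mathbb N$. Then for any $a_1,\dots,a_N\in\mathbb R$, $$\alpha^{-4p}\Big\|\sum_{n=1}^N a_nx_n\Big\|_p\le M^{1/p}\Big|\sum_{n=1}^N a_nx_n\Big|_{p,r}\le 6(p+q)\alpha^4\Big\|\sum_{n=1}^N a_nx_n\Big\|_p.$$
   Context: $c_{00}$ = finitely supported real sequences; a block sequence $(x_n)$ means $\max{\rm supp}\,x_n<\min{\rm supp}\,x_{n+1}$. For $\beta>0$ let $C_\beta=\{\pm\beta^j: j\in\mathbb Z\}\cup\{0\}$ and $\mathcal N_\beta=\{x\in c_{00}: x(i)\in C_\beta\ \forall i\}$. For $x\in\mathcal N_\alpha$ and $m\in\mathbb N$, $J_{m,x}=\{i\in{\rm supp}\,x: \alpha^{-m}x(i)\in C_s\}$ and $J_mx$ is the restriction of $x$ to $J_{m,x}$ (coordinates outside set to $0$). Let $K^{\mathcal M}_{q,r}$ be the smallest subset of $c_{00}$ containing all $\pm e_n$ and such that whenever $y_1,\dots,y_l\in K^{\mathcal M}_{q,r}$, $l\le r$, have pairwise disjoint supports, then $r^{-1/q}(y_1+\dots+y_l)\in K^{\mathcal M}_{q,r}$; $|x|_{p,r}=\sup\{\sum_i x(i)y(i):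 y\in K^{\mathcal M}_{q,r}\}$. *)

theory Defs
  imports Complex_Main
begin

definition supp :: "(nat \<Rightarrow> real) \<Rightarrow> nat set" where
  "supp x = {i. x i \<noteq> 0}"

definition c00 :: "(nat \<Rightarrow> real) set" where
  "c00 = {x. finite (supp x)}"

definition Cset :: "real \<Rightarrow> real set" where
  "Cset \<beta> = {v. \<exists>j::int. v = \<beta> powi j \<or> v = - (\<beta> powi j)} \<union> {0}"

definition Nset :: "real \<Rightarrow> (nat \<Rightarrow> real) set" where
  "Nset \<beta> = {x \<in> c00. \<forall>i. x i \<in> Cset \<beta>}"

definition Jidx :: "real \<Rightarrow> real \<Rightarrow> nat \<Rightarrow> (nat \<Rightarrow> real) \<Rightarrow> nat set" where
  "Jidx \<alpha> s m x = {i \<in> supp x. \<alpha> powi (- int m) * x i \<in> Cset s}"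

definition Jop :: "real \<Rightarrow> real \<Rightarrow> nat \<Rightarrow> (nat \<Rightarrow> real) \<Rightarrow> (nat \<Rightarrow> real)" where
  "Jop \<alpha> s m x = (\<lambda>i. if i \<in> Jidx \<alpha> s m x then x i else 0)"

definition block_seq :: "(nat \<Rightarrow> (nat \<Rightarrow> real)) \<Rightarrow> bool" where
  "block_seq xs \<longleftrightarrow> (\<forall>n\<ge>1. \<forall>i \<in> supp (xs n). \<forall>j \<in> supp (xs (Suc n)). i < j)"

definition unitvec :: "nat \<Rightarrow> (nat \<Rightarrow> real)" where
  "unitvec n = (\<lambda>i. if i = n then 1 else 0)"

inductive_set KM :: "real \<Rightarrow> nat \<Rightarrow> (nat \<Rightarrow> real) set" for q :: real and r :: nat where
  base_pos: "unitvec n \<in> KM q r"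
| base_neg: "(\<lambda>i. - unitvec n i) \<in> KM q r"
| comb: "\<lbrakk> \<forall>y\<in>set ys. y \<in> KM q r; 1 \<le> length ys; length ys \<le> r;
          \<forall>k<length ys. \<forall>l<length ys. k \<noteq> l \<longrightarrow> supp (ys ! k) \<inter> supp (ys ! l) = {} \<rbrakk>
        \<Longrightarrow> (\<lambda>i. real r powr (-1/q) * (\<Sum>y\<leftarrow>ys. y i)) \<in> KM q r"

definition pnorm :: "real \<Rightarrow> (nat \<Rightarrow> real) \<Rightarrow> real" where
  "pnorm p x = (\<Sum>i\<in>supp x. \<bar>x i\<bar> powr p) powr (1/p)"

text \<open>|x|_{p,r}, where q is the conjugate exponent of p (passed explicitly).\<close>
definition prnorm :: "real \<Rightarrow> nat \<Rightarrow> (nat \<Rightarrow> real) \<Rightarrow> real" where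
  "prnorm q r x = Sup {(\<Sum>i\<in>supp x. x i * y i) | y. y \<in> KM q r}"

end

theory Submission
  imports Defs
begin

text \<open>Write X = \<Sum>n a_n x_n and S = \<Sum>n |a_n|^p. Every |x_n(i)| is a power \<alpha>^j, and J_m x_n
  is the part of x_n with j = m (mod M); so x_n is the disjoint sum of M pieces of p-mass in
  [\<alpha>^(-3p), 1], and \<parallel>X\<parallel>_p^p equals M S up to the factor \<alpha>^(-3p).

  The norming set K consists exactly of the nonzero vectors with entries \<plusminus>r^(-d/q) and
  q-mass at most 1: one inclusion by induction, the other by packing the entries into r
  bins, as in the proof of Kraft's inequality.

  Upper bound: for y in K, a Young-type inequality on each coordinate, sharpened by the
  lattice structure of the exponents, gives \<langle>X, y\<rangle> \<le> 2 (A S)^(1/p), where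
  A = \<Sum>k<M \<alpha>^(-pk/q) \<le> 1 + 2q because \<alpha>^p \<ge> 2. Lower bound: on each block keep a single class
  J_m x_n, chosen according to |a_n|^p / S, and put there values \<plusminus>r^(-d/q) matched to |x_n(i)|;
  by the characterisation of K this vector lies in K, and its pairing with X is at least
  \<alpha>^(-p/q) \<alpha>^(-3p) S^(1/p).\<close>

lemma add_le_of_dvd_less:
  fixes v l c :: nat
  assumes "v dvd l" and "v dvd c" and "l < c"
  shows "l + v \<le> c"
proof -
  obtain k where k: "l = v * k" using assms(1) by (auto elim: dvdE)
  obtain k' where k': "c = v * k'" using assms(2) by (auto elim: dvdE)
  have "k < k'" using assms(3) k k' by simp
  then show ?thesis unfolding k k' by (metis Suc_leI mult_Suc_right add.commute mult_le_mono2)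
qed

lemma exists_light_bin:
  fixes w :: "'a \<Rightarrow> nat"
  assumes "finite S" and "\<forall>i\<in>S. g i < k" and "(\<Sum>i\<in>S. w i) < k * C"
  shows "\<exists>b<k. (\<Sum>i\<in>{i\<in>S. g i = b}. w i) < C"
proof (rule ccontr)
  assume "\<not> ?thesis"
  then have "(\<Sum>b<k. C) \<le> (\<Sum>b<k. \<Sum>i\<in>{i\<in>S. g i = b}. w i)"
    by (intro sum_mono) auto
  also have "\<dots> = (\<Sum>i\<in>S. w i)"
    using sum.group[of S "{..<k}" g w] assms(1,2) by (auto simp: image_subset_iff)
  finally show False using assms(3) by simp
qed

lemma divisible_bin_packing:
  fixes e :: "'a \<Rightarrow> nat" and R E k :: nat
  assumes "finite F" and "R \<ge> 1" and "\<forall>i\<in>F. e i \<le> E"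
    and "(\<Sum>i\<in>F. R ^ (E - e i)) \<le> k * R ^ E"
  shows "\<exists>g. (\<forall>i\<in>F. g i < k) \<and> (\<forall>b<k. (\<Sum>i\<in>{i\<in>F. g i = b}. R ^ (E - e i)) \<le> R ^ E)"
  using assms(1,3,4)
proof (induction F rule: finite_ranking_induct[where f = e])
  case empty
  then show ?case by auto
next
  case (insert x S)
  show ?case
  proof (cases "x \<in> S")
    case True
    then show ?thesis using insert by (simp add: insert_absorb)
  next
    case x_new: False
    obtain g where g_lt: "\<forall>i\<in>S. g i < k"
      and g_bins: "\<forall>b<k. (\<Sum>i\<in>{i\<in>S. g i = b}. R ^ (E - e i)) \<le> R ^ E"
      using insert x_new by auto
    define v where "v = R ^ (E - e x)"
    have v_ge_1: "v \<ge> 1" unfolding v_def using assms(2) by simp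
    \<comment> \<open>x is inserted last, so its size v is the smallest one and divides every load and the
        capacity; hence a bin whose load is below capacity still has room v.\<close>
    have v_dvd: "v dvd R ^ (E - e i)" if "i \<in> S" for i
      unfolding v_def using insert.hyps(2)[OF that] by (intro le_imp_power_dvd) auto
    have v_dvd_cap: "v dvd R ^ E" unfolding v_def by (intro le_imp_power_dvd) auto
    have "(\<Sum>i\<in>S. R ^ (E - e i)) < k * R ^ E"
      using insert.prems(2) x_new insert.hyps(1) v_ge_1 by (simp add: v_def)
    then have "\<exists>b<k. (\<Sum>i\<in>{i\<in>S. g i = b}. R ^ (E - e i)) < R ^ E"
      using exists_light_bin[OF insert.hyps(1) g_lt] by blast
    then obtain b where b: "b < k" and b_room: "(\<Sum>i\<in>{i\<in>S. g i = b}. R ^ (E - e i)) < R ^ E"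
      by auto
    have "v dvd (\<Sum>i\<in>{i\<in>S. g i = b}. R ^ (E - e i))" by (intro dvd_sum) (auto intro: v_dvd)
    then have b_fits: "(\<Sum>i\<in>{i\<in>S. g i = b}. R ^ (E - e i)) + v \<le> R ^ E"
      using v_dvd_cap b_room by (rule add_le_of_dvd_less)
    define g' where "g' = g(x := b)"
    have "(\<Sum>i\<in>{i\<in>insert x S. g' i = b'}. R ^ (E - e i)) \<le> R ^ E" if "b' < k" for b'
    proof (cases "b' = b")
      case True
      then have "{i\<in>insert x S. g' i = b'} = insert x {i\<in>S. g i = b}"
        using x_new by (auto simp: g'_def)
      then show ?thesis using b_fits x_new insert.hyps(1) by (simp add: v_def)
    next
      case False
      then have "{i\<in>insert x S. g' i = b'} = {i\<in>S. g i = b'}"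
        using x_new by (auto simp: g'_def)
      then show ?thesis using g_bins that by simp
    qed
    moreover have "\<forall>i\<in>insert x S. g' i < k" using g_lt b by (auto simp: g'_def)
    ultimately show ?thesis by blast
  qed
qed

lemma supp_unitvec [simp]: "supp (unitvec n) = {n}"
  by (auto simp: supp_def unitvec_def)

lemma KM_of_partition:
  fixes q :: real and r :: nat and g :: "nat \<Rightarrow> nat"
  assumes r: "r > 0" and fin: "finite (supp y)" and ne: "supp y \<noteq> {}"
    and g_lt: "\<forall>i\<in>supp y. g i < r"
    and parts: "\<And>b. b < r \<Longrightarrow> {i\<in>supp y. g i = b} \<noteq> {} \<Longrightarrow>
      (\<lambda>i. if i \<in> supp y \<and> g i = b then real r powr (1/q) * y i else 0) \<in> KM q r"
  shows "y \<in> KM q r"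
proof -
  define yb where "yb b = (\<lambda>i. if i \<in> supp y \<and> g i = b then real r powr (1/q) * y i else 0)" for b
  have supp_yb: "supp (yb b) = {i\<in>supp y. g i = b}" for b
    using r by (auto simp: yb_def supp_def)
  define bs where "bs = filter (\<lambda>b. {i\<in>supp y. g i = b} \<noteq> {}) [0..<r]"
  define ys where "ys = map yb bs"
  have dist_bs: "distinct bs" by (simp add: bs_def)
  have set_bs: "set bs = {b. b < r \<and> {i\<in>supp y. g i = b} \<noteq> {}}" by (auto simp: bs_def)
  have "\<forall>z\<in>set ys. z \<in> KM q r" using parts set_bs by (auto simp: ys_def yb_def)
  moreover have "1 \<le> length ys"
  proof -
    obtain i where "i \<in> supp y" using ne by auto
    then have "g i \<in> set bs" using set_bs g_lt by auto
    then show ?thesis by (auto simp: ys_def Suc_le_eq)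
  qed
  moreover have "length ys \<le> r"
    unfolding ys_def bs_def using length_filter_le[of _ "[0..<r]"] by simp
  moreover have "\<forall>k<length ys. \<forall>l<length ys. k \<noteq> l \<longrightarrow> supp (ys ! k) \<inter> supp (ys ! l) = {}"
  proof (intro allI impI)
    fix k l assume "k < length ys" "l < length ys" "k \<noteq> l"
    then have "bs ! k \<noteq> bs ! l" using dist_bs by (simp add: ys_def nth_eq_iff_index_eq)
    then show "supp (ys ! k) \<inter> supp (ys ! l) = {}"
      using \<open>k < length ys\<close> \<open>l < length ys\<close> by (auto simp: ys_def supp_yb)
  qed
  ultimately have "(\<lambda>i. real r powr (-1/q) * (\<Sum>z\<leftarrow>ys. z i)) \<in> KM q r"
    by (rule KM.comb)
  moreover have "real r powr (-1/q) * (\<Sum>z\<leftarrow>ys. z i) = y i" for i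
  proof -
    have "(\<Sum>z\<leftarrow>ys. z i) = (\<Sum>b\<in>set bs. yb b i)"
      unfolding ys_def using dist_bs by (simp add: sum_list_distinct_conv_sum_set comp_def)
    also have "\<dots> = real r powr (1/q) * y i"
    proof (cases "i \<in> supp y")
      case True
      then have "(\<Sum>b\<in>set bs. yb b i) = yb (g i) i"
        using set_bs g_lt by (intro sum.remove[THEN trans]) (auto simp: yb_def intro!: sum.neutral)
      then show ?thesis using True by (simp add: yb_def)
    next
      case False
      then have "y i = 0" by (simp add: supp_def)
      then show ?thesis by (simp add: yb_def sum.neutral)
    qed
    finally show ?thesis using r by (simp add: powr_add[symmetric])
  qed
  ultimately show ?thesis by simp
qed

lemma KM_of_level_zero:
  fixes q :: real and r :: nat and e :: "nat \<Rightarrow> nat"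
  assumes r: "r > 1" and fin: "finite (supp y)" and i: "i \<in> supp y" and e_i: "e i = 0"
    and levels: "\<forall>i\<in>supp y. \<bar>y i\<bar> = real r powr (- real (e i) / q)"
    and budget: "(\<Sum>i\<in>supp y. r ^ (E - e i)) \<le> r ^ E"
  shows "y \<in> KM q r"
proof -
  have "supp y = {i}"
  proof (rule ccontr)
    assume "supp y \<noteq> {i}"
    then obtain j where j: "j \<in> supp y" "j \<noteq> i" using i by auto
    have "r ^ E + r ^ (E - e j) = (\<Sum>i\<in>{i,j}. r ^ (E - e i))" using j e_i by simp
    also have "\<dots> \<le> (\<Sum>i\<in>supp y. r ^ (E - e i))" using fin i j by (intro sum_mono2) auto
    moreover have "0 < r ^ (E - e j)" using r by simp
    ultimately show False using budget by linarith
  qed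
  moreover have "\<bar>y i\<bar> = 1" using levels i e_i r by simp
  ultimately have "y = unitvec i \<or> y = (\<lambda>k. - unitvec i k)"
    by (auto simp: supp_def unitvec_def fun_eq_iff abs_if split: if_splits)
  then show ?thesis by (auto intro: KM.intros)
qed

lemma abs_rescaled_level:
  fixes q :: real and r :: nat
  assumes "q > 0" and "e \<ge> 1" and "\<bar>v\<bar> = real r powr (- real e / q)"
  shows "\<bar>real r powr (1/q) * v\<bar> = real r powr (- real (e - 1) / q)"
  using assms by (simp add: abs_mult of_nat_diff powr_add[symmetric] field_simps)

lemma KM_of_kraft_nat:
  fixes q :: real and r :: nat and e :: "nat \<Rightarrow> nat"
  assumes r: "r > 1" and q: "q > 0"
    and "finite (supp y)" and "supp y \<noteq> {}"
    and "\<forall>i\<in>supp y. e i \<le> E \<and> \<bar>y i\<bar> = real r powr (- real (e i) / q)"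
    and "(\<Sum>i\<in>supp y. r ^ (E - e i)) \<le> r ^ E"
  shows "y \<in> KM q r"
  using assms(3-)
proof (induction E arbitrary: y e)
  case 0
  then obtain i where "i \<in> supp y" by auto
  then show ?case using 0 by (intro KM_of_level_zero[OF r, where i = i and e = e and E = 0]) auto
next
  case (Suc E)
  note fin = Suc.prems(1) and ne = Suc.prems(2) and levels = Suc.prems(3)
  show ?case
  proof (cases "\<exists>i\<in>supp y. e i = 0")
    case True
    then obtain i where "i \<in> supp y" "e i = 0" by auto
    then show ?thesis
      using Suc.prems by (intro KM_of_level_zero[OF r fin, where i = i and e = e and E = "Suc E"]) auto
  next
    case False
    define e' where "e' i = e i - 1" for i
    have e_pos: "e i \<ge> 1" if "i \<in> supp y" for i using False that by force
    have "(\<Sum>i\<in>supp y. r ^ (E - e' i)) = (\<Sum>i\<in>supp y. r ^ (Suc E - e i))"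
      by (intro sum.cong) (auto simp: e'_def dest: e_pos intro!: arg_cong[where f="\<lambda>k. r ^ k"])
    also have "\<dots> \<le> r * r ^ E" using Suc.prems(4) by simp
    moreover have "\<forall>i\<in>supp y. e' i \<le> E" using levels by (auto simp: e'_def)
    ultimately obtain g where g_lt: "\<forall>i\<in>supp y. g i < r"
      and g_bins: "\<forall>b<r. (\<Sum>i\<in>{i\<in>supp y. g i = b}. r ^ (E - e' i)) \<le> r ^ E"
      using divisible_bin_packing[OF fin, where R = r and E = E and e = e' and k = r] r by auto
    show ?thesis
    proof (rule KM_of_partition[OF _ fin ne g_lt])
      fix b assume b: "b < r" and part_ne: "{i\<in>supp y. g i = b} \<noteq> {}"
      define z where "z = (\<lambda>i. if i \<in> supp y \<and> g i = b then real r powr (1/q) * y i else 0)"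
      have supp_z: "supp z = {i\<in>supp y. g i = b}"
        using r by (auto simp: z_def supp_def)
      have "e' i \<le> E \<and> \<bar>z i\<bar> = real r powr (- real (e' i) / q)" if "i \<in> supp z" for i
      proof -
        have i: "i \<in> supp y" "g i = b" using that supp_z by auto
        then have "\<bar>z i\<bar> = real r powr (- real (e' i) / q)"
          unfolding z_def e'_def using abs_rescaled_level[OF q e_pos] levels by simp
        then show ?thesis using levels i by (auto simp: e'_def)
      qed
      moreover have "(\<Sum>i\<in>supp z. r ^ (E - e' i)) \<le> r ^ E" using g_bins b supp_z by simp
      moreover have "finite (supp z)" "supp z \<noteq> {}" using fin part_ne supp_z by auto
      ultimately show "z \<in> KM q r" by (intro Suc.IH[of z e']) auto
    qed (use r in simp)
  qed
qed

lemma KM_of_kraft: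
  fixes q :: real and r :: nat
  assumes r: "r > 1" and q: "q > 0" and fin: "finite (supp y)" and ne: "supp y \<noteq> {}"
    and levels: "\<forall>i\<in>supp y. \<exists>d::nat. \<bar>y i\<bar> = real r powr (- real d / q)"
    and mass: "(\<Sum>i\<in>supp y. \<bar>y i\<bar> powr q) \<le> 1"
  shows "y \<in> KM q r"
proof -
  obtain e :: "nat \<Rightarrow> nat" where e: "\<forall>i\<in>supp y. \<bar>y i\<bar> = real r powr (- real (e i) / q)"
    using levels by metis
  define E where "E = Max (e ` supp y)"
  have e_le: "e i \<le> E" if "i \<in> supp y" for i using fin that by (auto simp: E_def)
  have y_powr_q: "\<bar>y i\<bar> powr q = real r powr (- real (e i))" if "i \<in> supp y" for i
    using e that q by (simp add: powr_powr)
  have "real (r ^ (E - e i)) = real r ^ E * \<bar>y i\<bar> powr q" if "i \<in> supp y" for i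
    using r e_le[OF that] unfolding y_powr_q[OF that]
    by (simp add: powr_realpow[symmetric] of_nat_diff powr_diff divide_inverse powr_minus)
  then have "real (\<Sum>i\<in>supp y. r ^ (E - e i)) = real r ^ E * (\<Sum>i\<in>supp y. \<bar>y i\<bar> powr q)"
    by (simp add: sum_distrib_left)
  also have "\<dots> \<le> real (r ^ E)" using mass r by (simp add: mult_left_le)
  finally have "(\<Sum>i\<in>supp y. r ^ (E - e i)) \<le> r ^ E" by (simp only: of_nat_le_iff)
  then show ?thesis using KM_of_kraft_nat[OF r q fin ne] e e_le by blast
qed

lemma sum_list_apply_disjoint:
  assumes disj: "\<forall>k<length ys. \<forall>l<length ys. k \<noteq> l \<longrightarrow> supp (ys ! k) \<inter> supp (ys ! l) = {}"
    and k: "k < length ys" and i: "i \<in> supp (ys ! k)"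
  shows "(\<Sum>y\<leftarrow>ys. y i) = (ys ! k) i"
proof -
  have "(ys ! k') i = 0" if "k' \<in> {..<length ys} - {k}" for k'
    using disj that k i by (auto simp: supp_def)
  then have "(\<Sum>k'<length ys. (ys ! k') i) = (ys ! k) i"
    using k by (intro sum.remove[THEN trans]) (auto intro!: sum.neutral)
  then show ?thesis by (simp add: sum_list_sum_nth atLeast0LessThan)
qed

lemma supp_sum_list_disjoint:
  assumes "\<forall>k<length ys. \<forall>l<length ys. k \<noteq> l \<longrightarrow> supp (ys ! k) \<inter> supp (ys ! l) = {}"
  shows "supp (\<lambda>i. \<Sum>y\<leftarrow>ys. y i) = (\<Union>k<length ys. supp (ys ! k))"
proof
  show "supp (\<lambda>i. \<Sum>y\<leftarrow>ys. y i) \<subseteq> (\<Union>k<length ys. supp (ys ! k))"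
    by (auto simp: supp_def sum_list_sum_nth atLeast0LessThan intro: sum.neutral)
  show "(\<Union>k<length ys. supp (ys ! k)) \<subseteq> supp (\<lambda>i. \<Sum>y\<leftarrow>ys. y i)"
    using sum_list_apply_disjoint[OF assms] by (auto simp: supp_def)
qed

lemma KM_levels:
  fixes q :: real and r :: nat
  assumes r: "r > 1" and q: "q > 0" and "y \<in> KM q r"
  shows "finite (supp y) \<and> (\<forall>i\<in>supp y. \<exists>d::nat. \<bar>y i\<bar> = real r powr (- real d / q))
         \<and> (\<Sum>i\<in>supp y. \<bar>y i\<bar> powr q) \<le> 1"
  using assms(3)
proof (induction rule: KM.induct)
  case (base_pos n)
  have "unitvec n n = 1" by (simp add: unitvec_def)
  then show ?case using r by (auto intro: exI[of _ 0])
next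
  case (base_neg n)
  have "unitvec n n = 1" "supp (\<lambda>i. - unitvec n i) = {n}" by (auto simp: unitvec_def supp_def)
  then show ?case using r by (auto intro: exI[of _ 0])
next
  case (comb ys)
  define l where "l = length ys"
  define c where "c = real r powr (-1/q)"
  define z where "z i = c * (\<Sum>y\<leftarrow>ys. y i)" for i
  have IH: "finite (supp (ys ! k)) \<and> (\<forall>i\<in>supp (ys ! k). \<exists>d::nat. \<bar>(ys ! k) i\<bar> = real r powr (- real d / q))
      \<and> (\<Sum>i\<in>supp (ys ! k). \<bar>(ys ! k) i\<bar> powr q) \<le> 1" if "k < l" for k
    using comb.IH that by (auto simp: l_def)
  have c_pos: "c > 0" using r by (simp add: c_def)
  have z_on_block: "z i = c * (ys ! k) i" if "k < l" "i \<in> supp (ys ! k)" for i k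
    using sum_list_apply_disjoint[OF comb.hyps(3)] that by (simp add: z_def l_def)
  have supp_z: "supp z = (\<Union>k<l. supp (ys ! k))"
    using supp_sum_list_disjoint[OF comb.hyps(3)] c_pos by (simp add: z_def l_def supp_def)
  have "\<exists>d::nat. \<bar>z i\<bar> = real r powr (- real d / q)" if i: "i \<in> supp z" for i
  proof -
    obtain k where k: "k < l" "i \<in> supp (ys ! k)" using i supp_z by auto
    then obtain d :: nat where d: "\<bar>(ys ! k) i\<bar> = real r powr (- real d / q)" using IH by blast
    have "\<bar>z i\<bar> = c * \<bar>(ys ! k) i\<bar>" using z_on_block[OF k] c_pos by (simp add: abs_mult)
    also have "\<dots> = real r powr (- real (Suc d) / q)"
      using d q by (simp add: c_def powr_add[symmetric] field_simps)
    finally show ?thesis by blast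
  qed
  moreover have "(\<Sum>i\<in>supp z. \<bar>z i\<bar> powr q) \<le> 1"
  proof -
    have "c powr q = 1 / real r" using q r by (simp add: c_def powr_powr powr_minus[symmetric])
    then have z_pow: "\<bar>z i\<bar> powr q = (1 / real r) * \<bar>(ys ! k) i\<bar> powr q"
      if "k < l" "i \<in> supp (ys ! k)" for k i
      using z_on_block[OF that] c_pos by (simp add: abs_mult powr_mult)
    have "(\<Sum>i\<in>supp z. \<bar>z i\<bar> powr q) = (\<Sum>k<l. \<Sum>i\<in>supp (ys ! k). \<bar>z i\<bar> powr q)"
      unfolding supp_z using IH comb.hyps(3) by (intro sum.UNION_disjoint) (auto simp: l_def)
    also have "\<dots> = (1 / real r) * (\<Sum>k<l. \<Sum>i\<in>supp (ys ! k). \<bar>(ys ! k) i\<bar> powr q)"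
      by (simp add: z_pow sum_distrib_left)
    also have "\<dots> \<le> (1 / real r) * (\<Sum>k<l. 1)"
      using IH r by (intro mult_left_mono sum_mono) auto
    also have "\<dots> \<le> 1" using comb.hyps(2) r by (simp add: l_def)
    finally show ?thesis .
  qed
  ultimately show ?case using IH supp_z unfolding z_def c_def by auto
qed

lemma KM_abs_le_1:
  fixes q :: real and r :: nat
  assumes r: "r > 1" and q: "q > 0" and y: "y \<in> KM q r"
  shows "\<bar>y i\<bar> \<le> 1"
proof (cases "i \<in> supp y")
  case True
  then obtain d :: nat where "\<bar>y i\<bar> = real r powr (- real d / q)" using KM_levels[OF r q y] by blast
  also have "\<dots> \<le> real r powr 0" using r q by (intro powr_mono) auto
  finally show ?thesis using r by simp
next
  case False
  then show ?thesis by (simp add: supp_def)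
qed

lemma bdd_above_KM_pairings:
  assumes r: "r > 1" and q: "q > 0"
  shows "bdd_above {(\<Sum>i\<in>supp x. x i * y i) | y. y \<in> KM q r}"
proof (rule bdd_aboveI)
  fix v assume "v \<in> {(\<Sum>i\<in>supp x. x i * y i) | y. y \<in> KM q r}"
  then obtain y where y: "y \<in> KM q r" and v: "v = (\<Sum>i\<in>supp x. x i * y i)" by auto
  have "x i * y i \<le> \<bar>x i\<bar>" for i
  proof -
    have "x i * y i \<le> \<bar>x i\<bar> * \<bar>y i\<bar>" by (metis abs_ge_self abs_mult)
    also have "\<dots> \<le> \<bar>x i\<bar>" using KM_abs_le_1[OF r q y] by (simp add: mult_left_le)
    finally show ?thesis .
  qed
  then show "v \<le> (\<Sum>i\<in>supp x. \<bar>x i\<bar>)" unfolding v by (intro sum_mono)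
qed

lemma pnorm_nonneg: "pnorm p x \<ge> 0"
  by (simp add: pnorm_def)

lemma prnorm_ge_pairing:
  assumes "r > 1" and "q > 0" and "y \<in> KM q r"
  shows "(\<Sum>i\<in>supp x. x i * y i) \<le> prnorm q r x"
  unfolding prnorm_def using assms bdd_above_KM_pairings[OF assms(1,2)]
  by (intro cSup_upper) auto

lemma prnorm_le:
  assumes "\<And>y. y \<in> KM q r \<Longrightarrow> (\<Sum>i\<in>supp x. x i * y i) \<le> b"
  shows "prnorm q r x \<le> b"
  unfolding prnorm_def using assms KM.base_pos[where n = 0] by (intro cSup_least) auto

lemma prnorm_nonneg:
  assumes "r > 1" and "q > 0"
  shows "prnorm q r x \<ge> 0"
proof -
  define v where "v = (\<Sum>i\<in>supp x. x i * unitvec 0 i)"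
  have "v \<le> prnorm q r x" unfolding v_def by (intro prnorm_ge_pairing assms KM.base_pos)
  moreover have "- v \<le> prnorm q r x"
    using prnorm_ge_pairing[OF assms KM.base_neg[where n = 0], of x] by (simp add: v_def sum_negf)
  ultimately show ?thesis by linarith
qed

definition mod_rep :: "nat \<Rightarrow> int \<Rightarrow> nat" where
  "mod_rep M j = nat ((j - 1) mod int M) + 1"

lemma mod_rep_in_range:
  assumes "M > 0"
  shows "mod_rep M j \<in> {1..M}"
proof -
  have "0 \<le> (j - 1) mod int M" "(j - 1) mod int M < int M" using assms by auto
  then show ?thesis by (auto simp: mod_rep_def)
qed

lemma dvd_diff_mod_rep:
  assumes "M > 0"
  shows "int M dvd (j - int (mod_rep M j))"
proof -
  have "int (mod_rep M j) = (j - 1) mod int M + 1" using assms by (simp add: mod_rep_def)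
  then have "j - int (mod_rep M j) = int M * ((j - 1) div int M)"
    by (simp add: minus_mod_eq_mult_div[symmetric])
  then show ?thesis by simp
qed

lemma eq_if_dvd_diff_in_range:
  assumes "m \<in> {1..M}" and "m' \<in> {1..M}" and "int M dvd (int m - int m')"
  shows "m = m'"
proof (rule ccontr)
  assume "m \<noteq> m'"
  then have "\<bar>int M\<bar> \<le> \<bar>int m - int m'\<bar>" using assms(3) by (intro dvd_imp_le_int) auto
  then show False using assms(1,2) by auto
qed

lemma dvd_diff_iff_mod_rep:
  assumes "M > 0" and "m \<in> {1..M}"
  shows "int M dvd (j - int m) \<longleftrightarrow> mod_rep M j = m"
proof
  assume "int M dvd (j - int m)"
  then have "int M dvd (j - int m) - (j - int (mod_rep M j))"
    using dvd_diff_mod_rep[OF assms(1)] by (rule dvd_diff)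
  then show "mod_rep M j = m"
    using eq_if_dvd_diff_in_range[OF mod_rep_in_range[OF assms(1)] assms(2)] by simp
qed (use dvd_diff_mod_rep[OF assms(1)] in auto)

lemma in_Cset_iff:
  assumes "\<beta> > 0" and "w \<noteq> 0"
  shows "w \<in> Cset \<beta> \<longleftrightarrow> (\<exists>k::int. \<bar>w\<bar> = \<beta> powi k)"
proof -
  have pos: "\<beta> powi k > 0" for k :: int using assms(1) by simp
  show ?thesis
  proof
    assume "w \<in> Cset \<beta>"
    then show "\<exists>k::int. \<bar>w\<bar> = \<beta> powi k"
      using assms(2) pos unfolding Cset_def by (auto simp: abs_minus_cancel less_imp_le)
  next
    assume "\<exists>k::int. \<bar>w\<bar> = \<beta> powi k"
    then obtain k :: int where "\<bar>w\<bar> = \<beta> powi k" by blast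
    then have "w = \<beta> powi k \<or> w = - (\<beta> powi k)" by (auto simp: abs_if split: if_splits)
    then show "w \<in> Cset \<beta>" unfolding Cset_def by blast
  qed
qed

lemma scaled_in_Cset_pow_iff_dvd:
  fixes \<alpha> v :: real and j m :: int
  assumes \<alpha>: "\<alpha> > 1" and v: "\<bar>v\<bar> = \<alpha> powr j"
  shows "\<alpha> powi (- m) * v \<in> Cset (\<alpha> ^ M) \<longleftrightarrow> int M dvd (j - m)"
proof -
  have powi_eq: "\<alpha> powi k = \<alpha> powr k" for k using \<alpha> by (simp add: powr_real_of_int')
  have abs_scaled: "\<bar>\<alpha> powi (- m) * v\<bar> = \<alpha> powr (j - m)"
    using v \<alpha> by (simp add: abs_mult powi_eq powr_add[symmetric])
  have pow_M: "(\<alpha> ^ M) powi k = \<alpha> powr (int M * k)" for k :: int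
  proof -
    have "(\<alpha> ^ M) powi k = \<alpha> powi (int M * k)" by (simp add: power_int_mult)
    then show ?thesis by (simp only: powi_eq)
  qed
  have "\<alpha> powi (- m) * v \<noteq> 0" using abs_scaled \<alpha> by auto
  then have "\<alpha> powi (- m) * v \<in> Cset (\<alpha> ^ M) \<longleftrightarrow> (\<exists>k::int. \<bar>\<alpha> powi (- m) * v\<bar> = (\<alpha> ^ M) powi k)"
    using \<alpha> by (intro in_Cset_iff) auto
  also have "\<dots> \<longleftrightarrow> (\<exists>k::int. \<alpha> powr (j - m) = \<alpha> powr (int M * k))"
    by (simp only: abs_scaled pow_M)
  also have "\<dots> \<longleftrightarrow> int M dvd (j - m)"
  proof -
    have "\<alpha> powr (j - m) = \<alpha> powr (int M * k) \<longleftrightarrow> j - m = int M * k" for k :: int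
      using \<alpha> by (simp del: of_int_diff of_int_mult of_int_of_nat_eq add: powr_inj)
    then show ?thesis by (auto simp: dvd_def)
  qed
  finally show ?thesis .
qed

text \<open>Exponent form of the Young-type bound u v \<le> \<lambda>^(-p/q) \<alpha>^(-p\<tau>/q) u^p + \<lambda> v^q for
  u = \<alpha>^j, v = \<alpha>^(-pMd/q) = r^(-d/q) and \<lambda> = \<alpha>^c: since the exponents live on lattices, one
  term dominates on its own, and the gain \<tau> depends only on the residue of j modulo M.\<close>

lemma young_exponent_cases:
  fixes p q c :: real and j :: int and M d :: nat
  assumes p: "p > 1" and q: "q > 1" and conj: "1/p + 1/q = 1" and M: "M > 0"
  shows "j - p * M * d / q \<le> p * j - p * (c + (j - \<lceil>c\<rceil>) mod int M) / q
    \<or> j - p * M * d / q \<le> c - p * M * d"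
proof -
  have p_div_q: "p / q = p - 1" using conj p q by (simp add: field_simps)
  have scale: "p * x / q = (p - 1) * x" for x by (metis p_div_q times_divide_eq_left)
  have lhs: "j - p * M * d / q = j - (p - 1) * (M * d)" using scale[of "M * d"] by (simp add: mult.assoc)
  define \<tau> where "\<tau> = (j - \<lceil>c\<rceil>) mod int M"
  show ?thesis
  proof (cases "j + real M * real d > c")
    case True
    then have e_nonneg: "0 \<le> j + int M * int d - \<lceil>c\<rceil>" by (simp add: ceiling_le_iff less_imp_le)
    have "(j + int M * int d - \<lceil>c\<rceil>) mod int M = \<tau>"
      unfolding \<tau>_def by (metis add.commute add_diff_eq mod_mult_self2 diff_add_eq)
    then have "\<tau> \<le> j + int M * int d - \<lceil>c\<rceil>" using e_nonneg M by (metis zmod_le_nonneg_dividend)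
    then have "real_of_int \<tau> \<le> real_of_int (j + int M * int d - \<lceil>c\<rceil>)" by (simp only: of_int_le_iff)
    then have "real_of_int \<tau> \<le> j + real M * real d - c"
      unfolding of_int_diff of_int_add of_int_mult of_int_of_nat_eq
      using le_of_int_ceiling[of c] by linarith
    then have "0 \<le> (p - 1) * (j + real M * real d - c - \<tau>)" using p by simp
    then have "j - p * M * d / q \<le> p * j - p * (c + \<tau>) / q"
      unfolding lhs scale by (simp add: algebra_simps)
    then show ?thesis unfolding \<tau>_def by blast
  next
    case False
    then show ?thesis unfolding lhs by (simp add: algebra_simps)
  qed
qed

lemma ln_2_ge_half: "ln 2 \<ge> (1/2 :: real)"
proof -
  have "exp (1/2) ^ 2 = exp (1::real)" by (simp add: power2_eq_square flip: exp_add)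
  also have "\<dots> \<le> 2 ^ 2" using exp_le by simp
  finally have "exp (1/2) \<le> (2::real)" by (rule power2_le_imp_le) simp
  then have "ln (exp (1/2)) \<le> ln (2::real)" by (subst ln_le_cancel_iff) auto
  then show ?thesis by simp
qed

lemma geometric_powr_sum_le:
  fixes \<alpha> p q :: real and M :: nat
  assumes \<alpha>: "\<alpha> > 1" and \<alpha>_p: "\<alpha> powr p \<ge> 2" and q: "q > 1"
  shows "(\<Sum>k<M. \<alpha> powr (- p * k / q)) \<le> 1 + 2 * q"
proof -
  define \<theta> where "\<theta> = \<alpha> powr (- p / q)"
  define u where "u = ln 2 / q"
  have u_pos: "u > 0" using q ln_2_ge_half by (simp add: u_def)
  have "\<theta> = (\<alpha> powr p) powr (- 1 / q)" using \<alpha> by (simp add: \<theta>_def powr_powr)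
  also have "\<dots> \<le> 2 powr (-1/q)" using \<alpha>_p q by (intro powr_mono2') auto
  also have "\<dots> = 1 / exp u" by (simp add: powr_def u_def exp_minus divide_inverse)
  also have "\<dots> \<le> 1 / (1 + u)"
    using u_pos exp_ge_add_one_self[of u] by (intro divide_left_mono) auto
  finally have \<theta>_le: "\<theta> \<le> 1 / (1 + u)" .
  have \<theta>_pos: "\<theta> > 0" using \<alpha> by (simp add: \<theta>_def)
  have "\<theta> + \<theta> * u \<le> 1" using \<theta>_le u_pos by (simp add: field_simps)
  moreover have "\<theta> * u > 0" using \<theta>_pos u_pos by simp
  ultimately have \<theta>_lt_1: "\<theta> < 1" by linarith
  have "(\<Sum>k<M. \<alpha> powr (- p * k / q)) = (\<Sum>k<M. \<theta> ^ k)"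
    using \<alpha> by (simp add: \<theta>_def powr_realpow[symmetric] powr_powr mult.commute)
  also have "\<dots> \<le> 1 / (1 - \<theta>)" using geometric_sum_less[OF \<theta>_pos \<theta>_lt_1, of "{..<M}"] by simp
  also have "\<dots> \<le> 1 / (1 - 1 / (1 + u))"
    using \<theta>_le \<theta>_lt_1 u_pos by (intro divide_left_mono) (auto simp: field_simps)
  also have "\<dots> = 1 + q / ln 2" using u_pos q ln_2_ge_half by (simp add: u_def field_simps)
  also have "\<dots> \<le> 1 + 2 * q"
    using q ln_2_ge_half divide_left_mono[of "1/2" "ln 2" q] by simp
  finally show ?thesis .
qed

lemma block_seq_less:
  assumes block: "block_seq xs" and ne: "\<And>n. 1 \<le> n \<Longrightarrow> supp (xs n) \<noteq> {}"
    and n: "1 \<le> n" and "n < n'" and i: "i \<in> supp (xs n)" and "j \<in> supp (xs n')"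
  shows "i < j"
  using \<open>n < n'\<close> \<open>j \<in> supp (xs n')\<close>
proof (induction n' arbitrary: j rule: less_induct)
  case (less n')
  obtain n'' where n'': "n' = Suc n''" using less.prems(1) by (cases n') auto
  show ?case
  proof (cases "n'' = n")
    case True
    then show ?thesis using block n i less.prems(2) n'' by (auto simp: block_seq_def)
  next
    case False
    then have "n < n''" using less.prems(1) n'' by simp
    moreover obtain z where z: "z \<in> supp (xs n'')" using ne[of n''] n \<open>n < n''\<close> by auto
    ultimately have "i < z" using less.IH n'' by auto
    moreover have "1 \<le> n''" using n \<open>n < n''\<close> by simp
    then have "z < j" using block z less.prems(2) n'' unfolding block_seq_def by blast
    ultimately show ?thesis by simp
  qed
qed

lemma block_seq_disjoint:
  assumes "block_seq xs" and "\<And>n. 1 \<le> n \<Longrightarrow> supp (xs n) \<noteq> {}"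
    and "1 \<le> n" and "1 \<le> n'" and "n \<noteq> n'"
  shows "supp (xs n) \<inter> supp (xs n') = {}"
  using block_seq_less[OF assms(1,2)] assms(3-5) by (metis disjoint_iff less_asym' linorder_neqE_nat)

text \<open>The hypotheses of the theorem, with the lower bound \<alpha>^(-3) for \<parallel>J_m x_n\<parallel>_p generalised
  to \<delta>, M = \<lfloor>log2 r\<rfloor> weakened to 2^M \<le> r, and s = r^(1/p) written as \<alpha>^M.\<close>

locale block_sequence =
  fixes p q \<alpha> \<delta> :: real and r M :: nat and xs :: "nat \<Rightarrow> nat \<Rightarrow> real"
  assumes p_gt_1: "1 < p" and q_gt_1: "1 < q" and conjugate: "1/p + 1/q = 1"
    and M_pos: "0 < M" and two_pow_M_le: "2 ^ M \<le> r"
    and \<alpha>_pos: "0 < \<alpha>" and \<alpha>_pow_M: "\<alpha> ^ M = real r powr (1/p)"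
    and xs_in_Nset: "\<And>n. 1 \<le> n \<Longrightarrow> xs n \<in> Nset \<alpha>"
    and block: "block_seq xs"
    and \<delta>_pos: "0 < \<delta>"
    and J_pnorm_bounds: "\<And>n m. 1 \<le> n \<Longrightarrow> 1 \<le> m \<Longrightarrow>
      \<delta> \<le> pnorm p (Jop \<alpha> (\<alpha> ^ M) m (xs n)) \<and> pnorm p (Jop \<alpha> (\<alpha> ^ M) m (xs n)) \<le> 1"
begin

lemma r_gt_1: "r > 1"
proof -
  have "(2::nat) ^ 1 \<le> 2 ^ M" using M_pos by (intro power_increasing) auto
  then show ?thesis using two_pow_M_le by simp
qed

lemma q_pos: "q > 0"
  using q_gt_1 by simp

lemma p_div_q: "p / q = p - 1"
  using conjugate p_gt_1 q_gt_1 by (simp add: field_simps)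

lemma p_mult_div_q: "p * x / q = (p - 1) * x"
  by (metis p_div_q times_divide_eq_left)

lemma \<alpha>_gt_1: "\<alpha> > 1"
proof (rule ccontr)
  assume "\<not> \<alpha> > 1"
  then have "\<alpha> ^ M \<le> 1" using \<alpha>_pos by (intro power_le_one) auto
  moreover have "real r powr (1/p) > 1" using r_gt_1 p_gt_1 by simp
  ultimately show False using \<alpha>_pow_M by simp
qed

lemma \<alpha>_powr_pM: "\<alpha> powr (p * M) = r"
proof -
  have "\<alpha> powr (p * M) = (\<alpha> ^ M) powr p"
    using \<alpha>_pos by (simp add: powr_realpow[symmetric] powr_powr mult.commute)
  also have "\<dots> = r" using p_gt_1 by (simp add: \<alpha>_pow_M powr_powr)
  finally show ?thesis .
qed

lemma \<alpha>_powr_p_ge_2: "\<alpha> powr p \<ge> 2"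
proof -
  have "(\<alpha> powr p) ^ M = \<alpha> powr (p * M)"
    using \<alpha>_pos by (simp add: powr_realpow[symmetric] powr_powr)
  then have "2 ^ M \<le> (\<alpha> powr p) ^ M"
    using \<alpha>_powr_pM two_pow_M_le by (metis of_nat_le_iff of_nat_numeral of_nat_power)
  then show ?thesis using M_pos by (simp add: power_mono_iff)
qed

lemma finite_supp_xs: "1 \<le> n \<Longrightarrow> finite (supp (xs n))"
  using xs_in_Nset by (auto simp: Nset_def c00_def)

definition expo :: "nat \<Rightarrow> nat \<Rightarrow> int" where
  "expo n i = (SOME j. \<bar>xs n i\<bar> = \<alpha> powr j)"

lemma abs_xs_eq:
  assumes "1 \<le> n" and "i \<in> supp (xs n)"
  shows "\<bar>xs n i\<bar> = \<alpha> powr expo n i"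
proof -
  have "xs n i \<in> Cset \<alpha>" "xs n i \<noteq> 0" using xs_in_Nset assms by (auto simp: Nset_def supp_def)
  then obtain j :: int where "\<bar>xs n i\<bar> = \<alpha> powi j" using in_Cset_iff[OF \<alpha>_pos] by blast
  then have "\<bar>xs n i\<bar> = \<alpha> powr j" using \<alpha>_pos by (simp add: powr_real_of_int')
  then show ?thesis unfolding expo_def by (rule someI)
qed

lemma abs_xs_powr_p:
  assumes "1 \<le> n" and "i \<in> supp (xs n)"
  shows "\<bar>xs n i\<bar> powr p = \<alpha> powr (p * expo n i)"
  using abs_xs_eq[OF assms] by (simp add: powr_powr mult.commute)

lemma Jidx_eq:
  assumes "1 \<le> n"
  shows "Jidx \<alpha> (\<alpha> ^ M) m (xs n) = {i \<in> supp (xs n). int M dvd (expo n i - m)}"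
  unfolding Jidx_def using scaled_in_Cset_pow_iff_dvd[OF \<alpha>_gt_1 abs_xs_eq[OF assms]] by auto

definition Jmass :: "nat \<Rightarrow> nat \<Rightarrow> real" where
  "Jmass n m = (\<Sum>i\<in>Jidx \<alpha> (\<alpha> ^ M) m (xs n). \<bar>xs n i\<bar> powr p)"

lemma Jmass_bounds:
  assumes "1 \<le> n" and "1 \<le> m"
  shows "\<delta> powr p \<le> Jmass n m \<and> Jmass n m \<le> 1"
proof -
  have "supp (Jop \<alpha> (\<alpha> ^ M) m (xs n)) = Jidx \<alpha> (\<alpha> ^ M) m (xs n)"
    by (auto simp: Jop_def Jidx_def supp_def)
  then have "pnorm p (Jop \<alpha> (\<alpha> ^ M) m (xs n)) = Jmass n m powr (1/p)"
    by (simp add: pnorm_def Jmass_def Jop_def)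
  then have bounds: "\<delta> \<le> Jmass n m powr (1/p)" "Jmass n m powr (1/p) \<le> 1"
    using J_pnorm_bounds[OF assms] by auto
  have "Jmass n m = (Jmass n m powr (1/p)) powr p"
    using p_gt_1 by (simp add: powr_powr Jmass_def sum_nonneg)
  moreover have "\<delta> powr p \<le> (Jmass n m powr (1/p)) powr p"
    using bounds \<delta>_pos p_gt_1 by (intro powr_mono2) auto
  moreover have "(Jmass n m powr (1/p)) powr p \<le> 1"
    using bounds p_gt_1 powr_mono2[of p "Jmass n m powr (1/p)" 1] by simp
  ultimately show ?thesis by simp
qed

lemma sum_supp_xs_by_class:
  assumes "1 \<le> n"
  shows "(\<Sum>i\<in>supp (xs n). h i) = (\<Sum>m\<in>{1..M}. \<Sum>i\<in>Jidx \<alpha> (\<alpha> ^ M) m (xs n). h i)"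
proof -
  have "(\<Sum>i\<in>supp (xs n). h i) = (\<Sum>m\<in>{1..M}. \<Sum>i\<in>{i\<in>supp (xs n). mod_rep M (expo n i) = m}. h i)"
    using mod_rep_in_range[OF M_pos] finite_supp_xs[OF assms] by (intro sum.group[symmetric]) auto
  also have "\<dots> = (\<Sum>m\<in>{1..M}. \<Sum>i\<in>Jidx \<alpha> (\<alpha> ^ M) m (xs n). h i)"
    using Jidx_eq[OF assms] dvd_diff_iff_mod_rep[OF M_pos] by (intro sum.cong) auto
  finally show ?thesis .
qed

lemma expo_nonpos:
  assumes n: "1 \<le> n" and i: "i \<in> supp (xs n)"
  shows "expo n i \<le> 0"
proof -
  define m where "m = mod_rep M (expo n i)"
  have m: "m \<in> {1..M}" using mod_rep_in_range[OF M_pos] by (simp add: m_def)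
  have "i \<in> Jidx \<alpha> (\<alpha> ^ M) m (xs n)"
    using Jidx_eq[OF n] i dvd_diff_mod_rep[OF M_pos] by (simp add: m_def)
  moreover have "finite (Jidx \<alpha> (\<alpha> ^ M) m (xs n))" using finite_supp_xs[OF n] Jidx_eq[OF n] by simp
  ultimately have "\<bar>xs n i\<bar> powr p \<le> Jmass n m" unfolding Jmass_def by (intro member_le_sum) auto
  then have "\<alpha> powr (p * expo n i) \<le> \<alpha> powr 0"
    using Jmass_bounds[OF n, of m] m abs_xs_powr_p[OF n i] by auto
  then have "p * expo n i \<le> 0" using \<alpha>_gt_1 powr_le_cancel_iff by blast
  then show ?thesis using p_gt_1 by (simp add: mult_le_0_iff)
qed

lemma supp_xs_nonempty: "1 \<le> n \<Longrightarrow> supp (xs n) \<noteq> {}"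
  using Jmass_bounds[of n 1] \<delta>_pos Jidx_eq[of n 1] by (auto simp: Jmass_def)

lemma supp_xs_disjoint: "1 \<le> n \<Longrightarrow> 1 \<le> n' \<Longrightarrow> n \<noteq> n' \<Longrightarrow> supp (xs n) \<inter> supp (xs n') = {}"
  using block_seq_disjoint[OF block supp_xs_nonempty] by blast

lemma sum_blocks_at:
  assumes "n \<in> {1..N}" and "i \<in> supp (xs n)"
    and "\<And>n'. n' \<in> {1..N} \<Longrightarrow> i \<notin> supp (xs n') \<Longrightarrow> f n' = 0"
  shows "(\<Sum>n'\<in>{1..N}. f n') = f n"
proof -
  have "f n' = 0" if "n' \<in> {1..N} - {n}" for n'
    using that assms supp_xs_disjoint[of n n'] by auto
  then show ?thesis using assms(1) by (intro sum.remove[THEN trans]) (auto intro: sum.neutral)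
qed

definition mass :: "nat \<Rightarrow> real" where
  "mass n = (\<Sum>i\<in>supp (xs n). \<bar>xs n i\<bar> powr p)"

lemma mass_bounds:
  assumes "1 \<le> n"
  shows "M * \<delta> powr p \<le> mass n \<and> mass n \<le> M"
proof -
  have "mass n = (\<Sum>m\<in>{1..M}. Jmass n m)"
    unfolding mass_def Jmass_def by (rule sum_supp_xs_by_class[OF assms])
  moreover have "(\<Sum>m\<in>{1..M}. \<delta> powr p) \<le> (\<Sum>m\<in>{1..M}. Jmass n m)"
    "(\<Sum>m\<in>{1..M}. Jmass n m) \<le> (\<Sum>m\<in>{1..M}. 1)"
    using Jmass_bounds[OF assms] by (intro sum_mono; simp)+
  ultimately show ?thesis by simp
qed

definition blocks_supp :: "nat \<Rightarrow> nat set" where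
  "blocks_supp N = (\<Union>n\<in>{1..N}. supp (xs n))"

lemma finite_blocks_supp: "finite (blocks_supp N)"
  using finite_supp_xs by (auto simp: blocks_supp_def)

lemma sum_blocks_supp: "(\<Sum>i\<in>blocks_supp N. F i) = (\<Sum>n\<in>{1..N}. \<Sum>i\<in>supp (xs n). F i)"
  unfolding blocks_supp_def using finite_supp_xs supp_xs_disjoint by (intro sum.UNION_disjoint) auto

lemma sum_supp_within_blocks:
  assumes "supp f \<subseteq> blocks_supp N" and "\<And>i. f i = 0 \<Longrightarrow> F i = 0"
  shows "(\<Sum>i\<in>supp f. F i) = (\<Sum>n\<in>{1..N}. \<Sum>i\<in>supp (xs n). F i)"
proof -
  have "(\<Sum>i\<in>supp f. F i) = (\<Sum>i\<in>blocks_supp N. F i)"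
    using assms finite_blocks_supp by (intro sum.mono_neutral_left) (auto simp: supp_def)
  then show ?thesis by (simp add: sum_blocks_supp)
qed

definition geo_sum :: real where
  "geo_sum = (\<Sum>k<M. \<alpha> powr (- p * k / q))"

lemma geo_sum_ge_1: "geo_sum \<ge> 1"
proof -
  have "(\<Sum>k\<in>{0::nat}. \<alpha> powr (- p * k / q)) \<le> geo_sum"
    unfolding geo_sum_def using M_pos by (intro sum_mono2) auto
  then show ?thesis using \<alpha>_pos by simp
qed

lemma geo_sum_le: "geo_sum \<le> 1 + 2 * q"
  unfolding geo_sum_def by (rule geometric_powr_sum_le[OF \<alpha>_gt_1 \<alpha>_powr_p_ge_2 q_gt_1])

lemma class_weighted_mass_le:
  assumes n: "1 \<le> n"
  shows "(\<Sum>i\<in>supp (xs n). \<alpha> powr (- p * ((expo n i - k) mod int M) / q) * \<bar>xs n i\<bar> powr p) \<le> geo_sum"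
proof -
  define g where "g m = nat ((int m - k) mod int M)" for m
  have g_lt: "g m < M" for m using M_pos by (simp add: g_def nat_less_iff)
  have class_const: "(expo n i - k) mod int M = int (g m)" if "i \<in> Jidx \<alpha> (\<alpha> ^ M) m (xs n)" for i m
  proof -
    have "int M dvd (expo n i - k) - (int m - k)" using that Jidx_eq[OF n] by auto
    then show ?thesis using M_pos by (simp add: g_def mod_eq_dvd_iff)
  qed
  have "inj_on g {1..M}"
  proof
    fix m m' assume m: "m \<in> {1..M}" and m': "m' \<in> {1..M}" and "g m = g m'"
    then have "(int m - k) mod int M = (int m' - k) mod int M"
      using M_pos by (simp add: g_def eq_nat_nat_iff)
    then have "int M dvd (int m - int m')" by (simp add: mod_eq_dvd_iff)
    then show "m = m'" using eq_if_dvd_diff_in_range[OF m m'] by simp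
  qed
  have "(\<Sum>i\<in>supp (xs n). \<alpha> powr (- p * ((expo n i - k) mod int M) / q) * \<bar>xs n i\<bar> powr p)
      = (\<Sum>m\<in>{1..M}. \<alpha> powr (- p * g m / q) * Jmass n m)"
    unfolding sum_supp_xs_by_class[OF n] Jmass_def sum_distrib_left
    by (intro sum.cong refl) (simp add: class_const)
  also have "\<dots> \<le> (\<Sum>m\<in>{1..M}. \<alpha> powr (- p * g m / q))"
    using Jmass_bounds[OF n] by (intro sum_mono) (auto intro: mult_left_le)
  also have "\<dots> = (\<Sum>k\<in>g ` {1..M}. \<alpha> powr (- p * k / q))"
    using \<open>inj_on g {1..M}\<close> by (simp add: sum.reindex)
  also have "\<dots> \<le> geo_sum" unfolding geo_sum_def using g_lt by (intro sum_mono2) auto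
  finally show ?thesis .
qed

lemma coordinate_young:
  assumes n: "1 \<le> n" and i: "i \<in> supp (xs n)" and y: "y \<in> KM q r" and t: "t > 0"
  shows "\<bar>xs n i\<bar> * \<bar>y i\<bar> \<le> t powr (1 - p) *
      (\<alpha> powr (- p * ((expo n i - \<lceil>log \<alpha> t\<rceil>) mod int M) / q) * \<bar>xs n i\<bar> powr p)
    + t * \<bar>y i\<bar> powr q"
proof (cases "y i = 0")
  case True
  then show ?thesis using t by (simp add: mult_nonneg_nonneg)
next
  case False
  define c where "c = log \<alpha> t"
  define \<tau> where "\<tau> = (expo n i - \<lceil>c\<rceil>) mod int M"
  have \<alpha>_c: "\<alpha> powr c = t" unfolding c_def using \<alpha>_gt_1 t by simp
  obtain d :: nat where d: "\<bar>y i\<bar> = real r powr (- real d / q)"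
    using KM_levels[OF r_gt_1 _ y] q_gt_1 False by (auto simp: supp_def)
  have y_eq: "\<bar>y i\<bar> = \<alpha> powr (- (p * M * d) / q)"
    unfolding d \<alpha>_powr_pM[symmetric] by (simp add: powr_powr)
  have "\<bar>xs n i\<bar> * \<bar>y i\<bar> = \<alpha> powr (expo n i - p * M * d / q)"
    using abs_xs_eq[OF n i] y_eq by (simp add: powr_add[symmetric])
  also have "\<dots> \<le> \<alpha> powr (p * expo n i - p * (c + \<tau>) / q) + \<alpha> powr (c - p * M * d)"
    using young_exponent_cases[OF p_gt_1 q_gt_1 conjugate M_pos, of "expo n i" d c] \<alpha>_gt_1
    unfolding \<tau>_def by (smt (verit) powr_ge_zero powr_le_cancel_iff)
  also have "\<alpha> powr (p * expo n i - p * (c + \<tau>) / q)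
      = (\<alpha> powr c) powr (- p / q) * (\<alpha> powr (- p * \<tau> / q) * \<bar>xs n i\<bar> powr p)"
  proof -
    have "p * expo n i - p * (c + \<tau>) / q = c * (- p / q) + (- p * \<tau> / q + p * expo n i)"
      using q_gt_1 by (simp add: field_simps)
    then show ?thesis by (simp only: powr_add powr_powr abs_xs_powr_p[OF n i])
  qed
  also have "(\<alpha> powr c) powr (- p / q) = t powr (1 - p)" using p_div_q by (simp add: \<alpha>_c)
  also have "\<alpha> powr (c - p * M * d) = \<alpha> powr c * \<bar>y i\<bar> powr q"
    using y_eq q_gt_1 by (simp add: powr_powr powr_add[symmetric])
  finally show ?thesis using \<alpha>_gt_1 t by (simp add: \<tau>_def c_def)
qed

lemma block_pairing_le:
  assumes n: "1 \<le> n" and y: "y \<in> KM q r" and t: "t > 0"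
  shows "(\<Sum>i\<in>supp (xs n). \<bar>xs n i\<bar> * \<bar>y i\<bar>)
    \<le> t powr (1 - p) * geo_sum + t * (\<Sum>i\<in>supp (xs n). \<bar>y i\<bar> powr q)"
proof -
  have "(\<Sum>i\<in>supp (xs n). \<bar>xs n i\<bar> * \<bar>y i\<bar>) \<le> t powr (1 - p) *
      (\<Sum>i\<in>supp (xs n). \<alpha> powr (- p * ((expo n i - \<lceil>log \<alpha> t\<rceil>) mod int M) / q) * \<bar>xs n i\<bar> powr p)
    + t * (\<Sum>i\<in>supp (xs n). \<bar>y i\<bar> powr q)"
    unfolding sum_distrib_left sum.distrib[symmetric]
    using coordinate_young[OF n _ y t] by (intro sum_mono)
  also have "\<dots> \<le> t powr (1 - p) * geo_sum + t * (\<Sum>i\<in>supp (xs n). \<bar>y i\<bar> powr q)"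
    using class_weighted_mass_le[OF n] by (intro add_right_mono mult_left_mono) auto
  finally show ?thesis .
qed

lemma scaled_block_pairing_le:
  assumes n: "1 \<le> n" and y: "y \<in> KM q r" and \<mu>: "\<mu> > 0"
  shows "\<bar>c\<bar> * (\<Sum>i\<in>supp (xs n). \<bar>xs n i\<bar> * \<bar>y i\<bar>)
    \<le> \<bar>c\<bar> powr p * \<mu> powr (1 - p) * geo_sum + \<mu> * (\<Sum>i\<in>supp (xs n). \<bar>y i\<bar> powr q)"
proof (cases "c = 0")
  case True
  then show ?thesis using \<mu> p_gt_1 by (simp add: sum_nonneg)
next
  case False
  then have c: "\<bar>c\<bar> > 0" by simp
  have "\<bar>c\<bar> * (\<Sum>i\<in>supp (xs n). \<bar>xs n i\<bar> * \<bar>y i\<bar>)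
      \<le> \<bar>c\<bar> * ((\<mu> / \<bar>c\<bar>) powr (1 - p) * geo_sum + \<mu> / \<bar>c\<bar> * (\<Sum>i\<in>supp (xs n). \<bar>y i\<bar> powr q))"
    using block_pairing_le[OF n y, of "\<mu> / \<bar>c\<bar>"] c \<mu> by (intro mult_left_mono) auto
  also have "\<dots> = (\<bar>c\<bar> * (\<mu> / \<bar>c\<bar>) powr (1 - p)) * geo_sum + \<mu> * (\<Sum>i\<in>supp (xs n). \<bar>y i\<bar> powr q)"
    using c by (simp add: distrib_left mult.assoc[symmetric])
  also have "\<bar>c\<bar> * (\<mu> / \<bar>c\<bar>) powr (1 - p) = \<bar>c\<bar> powr p * \<mu> powr (1 - p)"
    using c \<mu> by (simp add: powr_divide powr_diff divide_simps)
  finally show ?thesis .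
qed

lemma KM_block_masses_le_1:
  assumes y: "y \<in> KM q r"
  shows "(\<Sum>n\<in>{1..N}. \<Sum>i\<in>supp (xs n). \<bar>y i\<bar> powr q) \<le> 1"
proof -
  have levels: "finite (supp y)" "(\<Sum>i\<in>supp y. \<bar>y i\<bar> powr q) \<le> 1"
    using KM_levels[OF r_gt_1 _ y] q_gt_1 by auto
  have "(\<Sum>n\<in>{1..N}. \<Sum>i\<in>supp (xs n). \<bar>y i\<bar> powr q) = (\<Sum>i\<in>blocks_supp N. \<bar>y i\<bar> powr q)"
    by (rule sum_blocks_supp[symmetric])
  also have "\<dots> = (\<Sum>i\<in>blocks_supp N \<inter> supp y. \<bar>y i\<bar> powr q)"
    using finite_blocks_supp by (intro sum.mono_neutral_right) (auto simp: supp_def)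
  also have "\<dots> \<le> (\<Sum>i\<in>supp y. \<bar>y i\<bar> powr q)" using levels by (intro sum_mono2) auto
  finally show ?thesis using levels by linarith
qed

context
  fixes a :: "nat \<Rightarrow> real" and N :: nat
begin

definition comb :: "nat \<Rightarrow> real" where
  "comb i = (\<Sum>n=1..N. a n * xs n i)"

definition coeff_mass :: real where
  "coeff_mass = (\<Sum>n=1..N. \<bar>a n\<bar> powr p)"

lemma coeff_mass_nonneg: "coeff_mass \<ge> 0"
  by (simp add: coeff_mass_def sum_nonneg)

lemma comb_on_block:
  assumes "n \<in> {1..N}" and "i \<in> supp (xs n)"
  shows "comb i = a n * xs n i"
  unfolding comb_def using assms by (intro sum_blocks_at) (auto simp: supp_def)

lemma sum_supp_comb:
  assumes "\<And>i. comb i = 0 \<Longrightarrow> F i = 0"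
  shows "(\<Sum>i\<in>supp comb. F i) = (\<Sum>n\<in>{1..N}. \<Sum>i\<in>supp (xs n). F i)"
proof (rule sum_supp_within_blocks[OF _ assms])
  have "comb i = 0" if "i \<notin> blocks_supp N" for i
    using that by (auto simp: comb_def blocks_supp_def supp_def intro!: sum.neutral)
  then show "supp comb \<subseteq> blocks_supp N" by (auto simp: supp_def)
qed

lemma pnorm_comb: "pnorm p comb = (\<Sum>n=1..N. \<bar>a n\<bar> powr p * mass n) powr (1/p)"
proof -
  have "(\<Sum>i\<in>supp comb. \<bar>comb i\<bar> powr p) = (\<Sum>n\<in>{1..N}. \<Sum>i\<in>supp (xs n). \<bar>comb i\<bar> powr p)"
    by (rule sum_supp_comb) simp
  also have "\<dots> = (\<Sum>n\<in>{1..N}. \<bar>a n\<bar> powr p * mass n)"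
    unfolding mass_def sum_distrib_left
    by (intro sum.cong refl) (simp add: comb_on_block abs_mult powr_mult)
  finally show ?thesis by (simp add: pnorm_def)
qed

lemma pnorm_comb_le: "pnorm p comb \<le> (M * coeff_mass) powr (1/p)"
proof -
  have "(\<Sum>n=1..N. \<bar>a n\<bar> powr p * mass n) \<le> (\<Sum>n=1..N. \<bar>a n\<bar> powr p * M)"
    using mass_bounds by (intro sum_mono mult_left_mono) auto
  also have "\<dots> = M * coeff_mass" by (simp add: coeff_mass_def sum_distrib_left mult.commute)
  finally show ?thesis
    unfolding pnorm_comb using mass_bounds p_gt_1 \<delta>_pos
    by (intro powr_mono2) (auto intro!: sum_nonneg mult_nonneg_nonneg order_trans[OF _ conjunct1[OF mass_bounds]])
qed

lemma pnorm_comb_ge: "\<delta> * (M * coeff_mass) powr (1/p) \<le> pnorm p comb"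
proof -
  have "M * \<delta> powr p * coeff_mass = (\<Sum>n=1..N. \<bar>a n\<bar> powr p * (M * \<delta> powr p))"
    by (simp add: coeff_mass_def sum_distrib_left mult.commute)
  also have "\<dots> \<le> (\<Sum>n=1..N. \<bar>a n\<bar> powr p * mass n)"
    using mass_bounds by (intro sum_mono mult_left_mono) auto
  finally have "(M * \<delta> powr p * coeff_mass) powr (1/p) \<le> pnorm p comb"
    unfolding pnorm_comb using coeff_mass_nonneg p_gt_1 by (intro powr_mono2) auto
  moreover have "(M * \<delta> powr p * coeff_mass) powr (1/p) = \<delta> * (M * coeff_mass) powr (1/p)"
    using \<delta>_pos p_gt_1 coeff_mass_nonneg by (simp add: powr_mult powr_powr)
  ultimately show ?thesis by simp
qed

lemma pairing_comb_le_blocks: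
  "(\<Sum>i\<in>supp comb. comb i * y i) \<le> (\<Sum>n\<in>{1..N}. \<bar>a n\<bar> * (\<Sum>i\<in>supp (xs n). \<bar>xs n i\<bar> * \<bar>y i\<bar>))"
proof -
  have "(\<Sum>i\<in>supp comb. comb i * y i) = (\<Sum>n\<in>{1..N}. \<Sum>i\<in>supp (xs n). comb i * y i)"
    by (rule sum_supp_comb) simp
  also have "\<dots> \<le> (\<Sum>n\<in>{1..N}. \<bar>a n\<bar> * (\<Sum>i\<in>supp (xs n). \<bar>xs n i\<bar> * \<bar>y i\<bar>))"
    unfolding sum_distrib_left by (intro sum_mono) (simp add: comb_on_block abs_mult[symmetric])
  finally show ?thesis .
qed

lemma pairing_comb_le:
  assumes y: "y \<in> KM q r"
  shows "(\<Sum>i\<in>supp comb. comb i * y i) \<le> 2 * (geo_sum * coeff_mass) powr (1/p)"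
proof -
  define T where "T n = (\<Sum>i\<in>supp (xs n). \<bar>xs n i\<bar> * \<bar>y i\<bar>)" for n
  define \<beta> where "\<beta> n = (\<Sum>i\<in>supp (xs n). \<bar>y i\<bar> powr q)" for n
  have pairing_le: "(\<Sum>i\<in>supp comb. comb i * y i) \<le> (\<Sum>n\<in>{1..N}. \<bar>a n\<bar> * T n)"
    unfolding T_def by (rule pairing_comb_le_blocks)
  show ?thesis
  proof (cases "coeff_mass = 0")
    case True
    then have "a n = 0" if "n \<in> {1..N}" for n
      using that by (simp add: coeff_mass_def sum_nonneg_eq_0_iff)
    then have "(\<Sum>i\<in>supp comb. comb i * y i) \<le> 0" using pairing_le by simp
    moreover have "0 \<le> 2 * (geo_sum * coeff_mass) powr (1/p)" by simp
    ultimately show ?thesis by linarith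
  next
    case False
    define \<mu> where "\<mu> = (geo_sum * coeff_mass) powr (1/p)"
    have AS: "geo_sum * coeff_mass > 0"
      using False coeff_mass_nonneg geo_sum_ge_1 by (simp add: order_neq_le_trans)
    then have \<mu>: "\<mu> > 0" unfolding \<mu>_def by (intro powr_gt_zero[THEN iffD2]) linarith
    have "(\<Sum>n\<in>{1..N}. \<bar>a n\<bar> * T n)
        \<le> (\<Sum>n\<in>{1..N}. \<bar>a n\<bar> powr p * \<mu> powr (1 - p) * geo_sum + \<mu> * \<beta> n)"
      unfolding T_def \<beta>_def using scaled_block_pairing_le[OF _ y \<mu>] by (intro sum_mono) auto
    also have "\<dots> = \<mu> powr (1 - p) * (geo_sum * coeff_mass) + \<mu> * (\<Sum>n\<in>{1..N}. \<beta> n)"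
      by (simp add: sum.distrib sum_distrib_left sum_distrib_right coeff_mass_def mult_ac)
    also have "\<dots> \<le> \<mu> powr (1 - p) * (geo_sum * coeff_mass) + \<mu>"
      using KM_block_masses_le_1[OF y, of N] \<mu> by (simp add: \<beta>_def mult_left_le)
    also have "\<mu> powr (1 - p) * (geo_sum * coeff_mass) = \<mu>"
    proof -
      have "\<mu> powr (1 - p) * (geo_sum * coeff_mass)
          = (geo_sum * coeff_mass) powr ((1 - p) / p + 1)"
        using AS by (simp add: \<mu>_def powr_powr powr_add)
      also have "(1 - p) / p + 1 = 1 / p" using p_gt_1 by (simp add: field_simps)
      finally show ?thesis by (simp add: \<mu>_def)
    qed
    finally show ?thesis using pairing_le by (simp add: \<mu>_def)
  qed
qed

context
  assumes coeff_mass_pos: "coeff_mass > 0"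
begin

definition weight :: "nat \<Rightarrow> real" where
  "weight n = \<bar>a n\<bar> powr p / coeff_mass"

definition level :: "nat \<Rightarrow> int" where
  "level n = \<lfloor>log \<alpha> (weight n) / p\<rfloor>"

definition witness_class :: "nat \<Rightarrow> nat" where
  "witness_class n = mod_rep M (- level n)"

definition depth :: "nat \<Rightarrow> nat \<Rightarrow> nat" where
  "depth n i = nat (- ((expo n i + level n) div int M))"

text \<open>The norming vector for the lower bound: on block n it lives on the single class J_m x_n
  selected by the level of the weight |a_n|^p / S, and its entries \<plusminus>r^(-d/q) are chosen
  so that r^(-d) = \<alpha>^(p (j + level)) is at most the share of that weight carried by
  |x_n(i)|^p = \<alpha>^(pj).\<close>

definition witness :: "nat \<Rightarrow> real" where
  "witness i = (\<Sum>n\<in>{1..N}. if a n \<noteq> 0 \<and> i \<in> Jidx \<alpha> (\<alpha> ^ M) (witness_class n) (xs n)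
     then sgn (a n * xs n i) * real r powr (- real (depth n i) / q) else 0)"

lemma weight_pos: "a n \<noteq> 0 \<Longrightarrow> weight n > 0"
  using coeff_mass_pos by (simp add: weight_def)

lemma weight_le_1: "n \<in> {1..N} \<Longrightarrow> weight n \<le> 1"
  using coeff_mass_pos member_le_sum[of n "{1..N}" "\<lambda>n. \<bar>a n\<bar> powr p"]
  by (simp add: weight_def coeff_mass_def)

lemma sum_weight: "(\<Sum>n\<in>{1..N}. weight n) = 1"
  using coeff_mass_pos by (simp add: weight_def coeff_mass_def sum_divide_distrib[symmetric])

lemma level_bounds:
  assumes "a n \<noteq> 0"
  shows "\<alpha> powr (p * level n) \<le> weight n" and "weight n < \<alpha> powr (p * (level n + 1))"
proof -
  define t where "t = log \<alpha> (weight n) / p"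
  have "\<alpha> powr (p * t) = weight n"
    using p_gt_1 \<alpha>_gt_1 weight_pos[OF assms] by (simp add: t_def)
  moreover have "real_of_int \<lfloor>t\<rfloor> \<le> t" "t < real_of_int \<lfloor>t\<rfloor> + 1" by linarith+
  then have "p * level n \<le> p * t" "p * t < p * (level n + 1)"
    using p_gt_1 unfolding level_def t_def[symmetric] by simp_all
  ultimately show "\<alpha> powr (p * level n) \<le> weight n" "weight n < \<alpha> powr (p * (level n + 1))"
    using \<alpha>_gt_1 by (metis powr_le_cancel_iff, metis powr_less_cancel_iff)
qed

lemma level_nonpos:
  assumes "n \<in> {1..N}" and "a n \<noteq> 0"
  shows "level n \<le> 0"
proof -
  have "log \<alpha> (weight n) \<le> 0"
    using weight_le_1[OF assms(1)] weight_pos[OF assms(2)] \<alpha>_gt_1 by simp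
  then show ?thesis using p_gt_1 by (simp add: level_def divide_nonpos_pos)
qed

lemma depth_eq:
  assumes n: "n \<in> {1..N}" and "a n \<noteq> 0" and i: "i \<in> Jidx \<alpha> (\<alpha> ^ M) (witness_class n) (xs n)"
  shows "real M * real (depth n i) = - (expo n i + level n)"
proof -
  have n1: "1 \<le> n" using n by simp
  have "int M dvd (expo n i - int (witness_class n))" using i Jidx_eq[OF n1] by auto
  moreover have "int M dvd (- level n - int (witness_class n))"
    using dvd_diff_mod_rep[OF M_pos] by (simp add: witness_class_def)
  ultimately have "int M dvd (expo n i + level n)" using dvd_diff by fastforce
  then obtain k where k: "expo n i + level n = int M * k" by (auto elim: dvdE)
  have "i \<in> supp (xs n)" using i Jidx_eq[OF n1] by auto
  then have "expo n i + level n \<le> 0" using expo_nonpos[OF n1] level_nonpos[OF assms(1,2)] by fastforce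
  then have "k \<le> 0" using k M_pos by (simp add: mult_le_0_iff)
  then show ?thesis using k M_pos by (simp add: depth_def)
qed

lemma r_powr_depth:
  assumes "n \<in> {1..N}" and "a n \<noteq> 0" and "i \<in> Jidx \<alpha> (\<alpha> ^ M) (witness_class n) (xs n)"
  shows "real r powr (- real (depth n i) * t) = \<alpha> powr (p * t * (expo n i + level n))"
proof -
  have "real r powr (- real (depth n i) * t) = \<alpha> powr (p * t * - (real M * real (depth n i)))"
    by (simp add: \<alpha>_powr_pM[symmetric] powr_powr mult_ac)
  then show ?thesis by (simp add: depth_eq[OF assms] add.commute)
qed

lemma depth_budget:
  assumes n: "n \<in> {1..N}" and a: "a n \<noteq> 0" and i: "i \<in> Jidx \<alpha> (\<alpha> ^ M) (witness_class n) (xs n)"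
  shows "real r powr (- real (depth n i)) \<le> weight n * \<bar>xs n i\<bar> powr p"
proof -
  have i_supp: "i \<in> supp (xs n)" using i n Jidx_eq by auto
  have "real r powr (- real (depth n i)) = \<alpha> powr (p * level n) * \<alpha> powr (p * expo n i)"
    using r_powr_depth[OF assms, of 1] by (simp add: powr_add[symmetric] algebra_simps)
  also have "\<dots> \<le> weight n * \<bar>xs n i\<bar> powr p"
    using level_bounds(1)[OF a] n i_supp by (simp add: abs_xs_powr_p mult_right_mono)
  finally show ?thesis .
qed

lemma depth_pairing:
  assumes n: "n \<in> {1..N}" and a: "a n \<noteq> 0" and i: "i \<in> Jidx \<alpha> (\<alpha> ^ M) (witness_class n) (xs n)"
  shows "\<alpha> powr (- p / q) * weight n powr (1/q) * \<bar>xs n i\<bar> powr p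
    \<le> \<bar>xs n i\<bar> * real r powr (- real (depth n i) / q)"
proof -
  have n1: "1 \<le> n" and i_supp: "i \<in> supp (xs n)" using i n Jidx_eq by auto
  have "weight n powr (1/q) \<le> (\<alpha> powr (p * (level n + 1))) powr (1/q)"
    using level_bounds(2)[OF a] weight_pos[OF a] q_gt_1 by (intro powr_mono2) auto
  then have "weight n powr (1/q) \<le> \<alpha> powr (p * (level n + 1) / q)" by (simp add: powr_powr)
  then have "\<alpha> powr (- p / q) * weight n powr (1/q) * \<bar>xs n i\<bar> powr p
      \<le> \<alpha> powr (- p / q) * \<alpha> powr (p * (level n + 1) / q) * \<alpha> powr (p * expo n i)"
    unfolding abs_xs_powr_p[OF n1 i_supp] by (intro mult_right_mono mult_left_mono) auto
  also have "\<dots> = \<alpha> powr expo n i * \<alpha> powr (p * (1/q) * (expo n i + level n))"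
  proof -
    have "- p / q + p * (level n + 1) / q + p * expo n i = expo n i + p * (1/q) * (expo n i + level n)"
    proof -
      have "- p / q = - (p - 1)" using p_div_q by simp
      moreover have "p * (level n + 1) / q = (p - 1) * (level n + 1)" by (rule p_mult_div_q)
      moreover have "p * (1/q) * (expo n i + level n) = (p - 1) * (expo n i + level n)"
        using p_mult_div_q by simp
      ultimately show ?thesis by (simp add: algebra_simps)
    qed
    then show ?thesis by (simp only: powr_add[symmetric])
  qed
  also have "\<dots> = \<bar>xs n i\<bar> * real r powr (- real (depth n i) / q)"
    using r_powr_depth[OF assms, of "1/q"] abs_xs_eq[OF n1 i_supp] by simp
  finally show ?thesis .
qed

lemma witness_on_block:
  assumes "n \<in> {1..N}" and "i \<in> supp (xs n)"
  shows "witness i = (if a n \<noteq> 0 \<and> i \<in> Jidx \<alpha> (\<alpha> ^ M) (witness_class n) (xs n)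
     then sgn (a n * xs n i) * real r powr (- real (depth n i) / q) else 0)"
  unfolding witness_def using assms Jidx_eq
  by (intro sum_blocks_at) auto

lemma supp_witness_subset: "supp witness \<subseteq> blocks_supp N"
proof
  fix i assume "i \<in> supp witness"
  then obtain n where "n \<in> {1..N}" "i \<in> Jidx \<alpha> (\<alpha> ^ M) (witness_class n) (xs n)"
    unfolding witness_def supp_def by (auto elim: sum.not_neutral_contains_not_neutral split: if_splits)
  then show "i \<in> blocks_supp N" using Jidx_eq by (auto simp: blocks_supp_def)
qed

lemma block_witness_mass_le:
  assumes n: "n \<in> {1..N}"
  shows "(\<Sum>i\<in>supp (xs n). \<bar>witness i\<bar> powr q) \<le> weight n"
proof (cases "a n = 0")
  case True
  then show ?thesis using n by (simp add: witness_on_block weight_def)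
next
  case False
  let ?J = "Jidx \<alpha> (\<alpha> ^ M) (witness_class n) (xs n)"
  have n1: "1 \<le> n" using n by simp
  have J_sub: "?J \<subseteq> supp (xs n)" using Jidx_eq[OF n1] by auto
  have "(\<Sum>i\<in>supp (xs n). \<bar>witness i\<bar> powr q) = (\<Sum>i\<in>?J. \<bar>witness i\<bar> powr q)"
    using finite_supp_xs[OF n1] J_sub False
    by (intro sum.mono_neutral_right) (auto simp: witness_on_block[OF n])
  also have "\<dots> \<le> (\<Sum>i\<in>?J. weight n * \<bar>xs n i\<bar> powr p)"
  proof (intro sum_mono)
    fix i assume i: "i \<in> ?J"
    then have i_supp: "i \<in> supp (xs n)" using J_sub by auto
    then have "\<bar>witness i\<bar> = real r powr (- real (depth n i) / q)"
      using i False by (simp add: witness_on_block[OF n] abs_mult abs_sgn_eq supp_def)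
    then have "\<bar>witness i\<bar> powr q = real r powr (- real (depth n i))"
      using q_gt_1 by (simp add: powr_powr)
    then show "\<bar>witness i\<bar> powr q \<le> weight n * \<bar>xs n i\<bar> powr p"
      using depth_budget[OF n False i] by simp
  qed
  also have "\<dots> = weight n * Jmass n (witness_class n)"
    by (simp add: Jmass_def sum_distrib_left)
  also have "\<dots> \<le> weight n"
    using Jmass_bounds[OF n1] mod_rep_in_range[OF M_pos] weight_pos[OF False]
    by (simp add: witness_class_def mult_left_le)
  finally show ?thesis .
qed

lemma supp_witness_nonempty: "supp witness \<noteq> {}"
proof -
  have "\<exists>n\<in>{1..N}. a n \<noteq> 0"
    using coeff_mass_pos by (rule contrapos_pp) (simp add: coeff_mass_def)
  then obtain n where n: "n \<in> {1..N}" "a n \<noteq> 0" by blast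
  moreover have "1 \<le> witness_class n"
    using mod_rep_in_range[OF M_pos] by (simp add: witness_class_def)
  ultimately have "\<delta> powr p \<le> Jmass n (witness_class n)" using Jmass_bounds by simp
  then have "Jmass n (witness_class n) > 0" using \<delta>_pos by (smt (verit) powr_gt_zero)
  then have "Jidx \<alpha> (\<alpha> ^ M) (witness_class n) (xs n) \<noteq> {}" by (auto simp: Jmass_def)
  then obtain i where i: "i \<in> Jidx \<alpha> (\<alpha> ^ M) (witness_class n) (xs n)" by blast
  then have "i \<in> supp (xs n)" using n Jidx_eq by auto
  then have "witness i \<noteq> 0"
    using i n r_gt_1 by (simp add: witness_on_block supp_def sgn_if)
  then show ?thesis by (auto simp: supp_def)
qed

lemma witness_in_KM: "witness \<in> KM q r"
proof (rule KM_of_kraft[OF r_gt_1])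
  show "finite (supp witness)"
    using supp_witness_subset finite_blocks_supp by (rule finite_subset)
  show "\<forall>i\<in>supp witness. \<exists>d::nat. \<bar>witness i\<bar> = real r powr (- real d / q)"
  proof
    fix i assume i: "i \<in> supp witness"
    then obtain n where n: "n \<in> {1..N}" "i \<in> supp (xs n)"
      using supp_witness_subset by (auto simp: blocks_supp_def)
    then show "\<exists>d::nat. \<bar>witness i\<bar> = real r powr (- real d / q)"
      using i by (auto simp: witness_on_block[OF n] supp_def abs_mult abs_sgn_eq split: if_splits)
  qed
  have "(\<Sum>i\<in>supp witness. \<bar>witness i\<bar> powr q)
      = (\<Sum>n\<in>{1..N}. \<Sum>i\<in>supp (xs n). \<bar>witness i\<bar> powr q)"
    by (rule sum_supp_within_blocks[OF supp_witness_subset]) simp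
  also have "\<dots> \<le> (\<Sum>n\<in>{1..N}. weight n)"
    by (intro sum_mono block_witness_mass_le)
  finally show "(\<Sum>i\<in>supp witness. \<bar>witness i\<bar> powr q) \<le> 1"
    using sum_weight by simp
  show "supp witness \<noteq> {}" by (rule supp_witness_nonempty)
qed (use q_gt_1 in simp)

lemma comb_mult_witness:
  assumes n: "n \<in> {1..N}" and a: "a n \<noteq> 0" and i: "i \<in> Jidx \<alpha> (\<alpha> ^ M) (witness_class n) (xs n)"
  shows "comb i * witness i = \<bar>a n\<bar> * (\<bar>xs n i\<bar> * real r powr (- real (depth n i) / q))"
proof -
  have i_supp: "i \<in> supp (xs n)" using i n Jidx_eq by auto
  have "comb i * witness i = (a n * xs n i) * sgn (a n * xs n i) * real r powr (- real (depth n i) / q)"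
    using i a by (simp add: comb_on_block[OF n i_supp] witness_on_block[OF n i_supp])
  also have "(a n * xs n i) * sgn (a n * xs n i) = \<bar>a n\<bar> * \<bar>xs n i\<bar>"
    by (simp add: abs_mult[symmetric] sgn_if)
  finally show ?thesis by simp
qed

lemma block_witness_pairing_ge:
  assumes n: "n \<in> {1..N}"
  shows "\<bar>a n\<bar> powr p * (\<alpha> powr (- p / q) * \<delta> powr p) / coeff_mass powr (1/q)
    \<le> (\<Sum>i\<in>supp (xs n). comb i * witness i)"
proof (cases "a n = 0")
  case True
  then show ?thesis using n by (simp add: comb_on_block)
next
  case False
  let ?J = "Jidx \<alpha> (\<alpha> ^ M) (witness_class n) (xs n)"
  let ?c = "\<bar>a n\<bar> * (\<alpha> powr (- p / q) * weight n powr (1/q))"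
  have n1: "1 \<le> n" using n by simp
  have J_sub: "?J \<subseteq> supp (xs n)" using Jidx_eq[OF n1] by auto
  have "?c * \<delta> powr p \<le> ?c * Jmass n (witness_class n)"
    using Jmass_bounds[OF n1] mod_rep_in_range[OF M_pos]
    by (intro mult_left_mono) (auto simp: witness_class_def)
  also have "\<dots> = (\<Sum>i\<in>?J. \<bar>a n\<bar> * (\<alpha> powr (- p / q) * weight n powr (1/q) * \<bar>xs n i\<bar> powr p))"
    by (simp add: Jmass_def sum_distrib_left mult_ac)
  also have "\<dots> \<le> (\<Sum>i\<in>?J. comb i * witness i)"
  proof (intro sum_mono)
    fix i assume i: "i \<in> ?J"
    show "\<bar>a n\<bar> * (\<alpha> powr (- p / q) * weight n powr (1/q) * \<bar>xs n i\<bar> powr p)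
        \<le> comb i * witness i"
      unfolding comb_mult_witness[OF n False i]
      using depth_pairing[OF n False i] by (simp add: mult_left_mono)
  qed
  also have "\<dots> = (\<Sum>i\<in>supp (xs n). comb i * witness i)"
    using finite_supp_xs[OF n1] J_sub False
    by (intro sum.mono_neutral_left) (auto simp: witness_on_block[OF n])
  finally have "?c * \<delta> powr p \<le> (\<Sum>i\<in>supp (xs n). comb i * witness i)" .
  moreover have "?c * \<delta> powr p = (\<bar>a n\<bar> * weight n powr (1/q)) * (\<alpha> powr (- p / q) * \<delta> powr p)"
    by (simp add: mult_ac)
  moreover have "\<bar>a n\<bar> * weight n powr (1/q) = \<bar>a n\<bar> powr p / coeff_mass powr (1/q)"
  proof -
    have "\<bar>a n\<bar> * \<bar>a n\<bar> powr (p / q) = \<bar>a n\<bar> powr p"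
      by (simp add: powr_mult_base p_div_q)
    then show ?thesis using coeff_mass_pos
      by (simp add: weight_def powr_divide powr_powr mult.assoc[symmetric])
  qed
  ultimately show ?thesis by simp
qed

lemma pairing_witness_ge:
  "\<alpha> powr (- p / q) * \<delta> powr p * coeff_mass powr (1/p)
    \<le> (\<Sum>i\<in>supp comb. comb i * witness i)"
proof -
  define K where "K = \<alpha> powr (- p / q) * \<delta> powr p"
  have "coeff_mass powr (1/p) * coeff_mass powr (1/q) = coeff_mass"
    using coeff_mass_pos conjugate by (simp add: powr_add[symmetric])
  then have "K * coeff_mass powr (1/p) = coeff_mass * K / coeff_mass powr (1/q)"
    using coeff_mass_pos by (simp add: field_simps)
  also have "\<dots> = (\<Sum>n\<in>{1..N}. \<bar>a n\<bar> powr p * K / coeff_mass powr (1/q))"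
    by (simp add: coeff_mass_def sum_distrib_right sum_divide_distrib)
  also have "\<dots> \<le> (\<Sum>n\<in>{1..N}. \<Sum>i\<in>supp (xs n). comb i * witness i)"
    unfolding K_def by (intro sum_mono block_witness_pairing_ge)
  also have "\<dots> = (\<Sum>i\<in>supp comb. comb i * witness i)"
    by (rule sum_supp_comb[symmetric]) simp
  finally show ?thesis by (simp add: K_def)
qed

end

theorem pnorm_comb_le_prnorm:
  "\<alpha> powr (- p / q) * \<delta> powr p * pnorm p comb \<le> M powr (1/p) * prnorm q r comb"
proof (cases "coeff_mass = 0")
  case True
  then have "pnorm p comb = 0"
    using pnorm_comb_le pnorm_nonneg by (simp add: antisym)
  then show ?thesis using prnorm_nonneg[OF r_gt_1 q_pos] by simp
next
  case False
  then have S: "coeff_mass > 0" using coeff_mass_nonneg by simp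
  have "\<alpha> powr (- p / q) * \<delta> powr p * pnorm p comb
      \<le> \<alpha> powr (- p / q) * \<delta> powr p * (M * coeff_mass) powr (1/p)"
    using pnorm_comb_le by (intro mult_left_mono) auto
  also have "\<dots> = M powr (1/p) * (\<alpha> powr (- p / q) * \<delta> powr p * coeff_mass powr (1/p))"
    using S by (simp add: powr_mult)
  also have "\<dots> \<le> M powr (1/p) * prnorm q r comb"
    using pairing_witness_ge[OF S] prnorm_ge_pairing[OF r_gt_1 q_pos witness_in_KM[OF S], of comb]
    by (intro mult_left_mono) auto
  finally show ?thesis .
qed

theorem prnorm_comb_le_pnorm:
  "M powr (1/p) * prnorm q r comb \<le> 2 * (1 + 2 * q) / \<delta> * pnorm p comb"
proof -
  have "prnorm q r comb \<le> 2 * (geo_sum * coeff_mass) powr (1/p)"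
    by (intro prnorm_le pairing_comb_le)
  then have "\<delta> * M powr (1/p) * prnorm q r comb
      \<le> \<delta> * M powr (1/p) * (2 * (geo_sum * coeff_mass) powr (1/p))"
    using \<delta>_pos by (intro mult_left_mono) auto
  also have "\<dots> = 2 * geo_sum powr (1/p) * (\<delta> * (M * coeff_mass) powr (1/p))"
    using geo_sum_ge_1 coeff_mass_nonneg by (simp add: powr_mult mult_ac)
  also have "\<dots> \<le> 2 * (1 + 2 * q) * pnorm p comb"
  proof (rule mult_mono)
    have "geo_sum powr (1/p) \<le> geo_sum powr 1"
      using geo_sum_ge_1 p_gt_1 by (intro powr_mono) auto
    then show "2 * geo_sum powr (1/p) \<le> 2 * (1 + 2 * q)" using geo_sum_le geo_sum_ge_1 by simp
  qed (use pnorm_comb_ge q_gt_1 \<delta>_pos in auto)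
  finally show ?thesis using \<delta>_pos by (simp add: field_simps)
qed

end

end

lemma nat_floor_log2:
  assumes "r > (1::nat)"
  shows "0 < nat \<lfloor>log 2 r\<rfloor>" and "2 ^ nat \<lfloor>log 2 r\<rfloor> \<le> r"
proof -
  have log_ge_1: "log 2 r \<ge> 1" using assms by simp
  then show "0 < nat \<lfloor>log 2 r\<rfloor>" by linarith
  have "real (2 ^ nat \<lfloor>log 2 r\<rfloor>) = 2 powr real (nat \<lfloor>log 2 r\<rfloor>)"
    by (simp add: powr_realpow)
  also have "\<dots> \<le> 2 powr log 2 r" using log_ge_1 by (intro powr_mono) linarith+
  also have "\<dots> = r" using assms by simp
  finally show "2 ^ nat \<lfloor>log 2 r\<rfloor> \<le> r" by (simp only: of_nat_le_iff)
qed

theorem mainTheorem5: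
  fixes p q \<alpha> :: real and r M N :: nat
    and xs :: "nat \<Rightarrow> (nat \<Rightarrow> real)" and a :: "nat \<Rightarrow> real"
  assumes "1 < p" and "1 < q" and "1/p + 1/q = 1"
    and "r > 1"
    and "M = nat \<lfloor>log 2 (real r)\<rfloor>"
    and "\<alpha> > 0" and "\<alpha> ^ M = real r powr (1/p)"
    and "\<forall>n\<ge>1. xs n \<in> Nset \<alpha>"
    and "block_seq xs"
    and "\<forall>n\<ge>1. \<forall>m\<ge>1. \<alpha> powr (-3) \<le> pnorm p (Jop \<alpha> (real r powr (1/p)) m (xs n))
                          \<and> pnorm p (Jop \<alpha> (real r powr (1/p)) m (xs n)) \<le> 1"
  shows "\<alpha> powr (-4*p) * pnorm p (\<lambda>i. \<Sum>n=1..N. a n * xs n i)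
           \<le> real M powr (1/p) * prnorm q r (\<lambda>i. \<Sum>n=1..N. a n * xs n i)
       \<and> real M powr (1/p) * prnorm q r (\<lambda>i. \<Sum>n=1..N. a n * xs n i)
           \<le> 6 * (p + q) * \<alpha> ^ 4 * pnorm p (\<lambda>i. \<Sum>n=1..N. a n * xs n i)"
proof -
  note J_bounds = assms(10)[unfolded assms(7)[symmetric]]
  interpret block_sequence p q \<alpha> "\<alpha> powr (-3)" r M xs
  proof
    show "0 < M" "2 ^ M \<le> r" using nat_floor_log2[OF assms(4)] unfolding assms(5) by simp_all
    show "\<And>n. 1 \<le> n \<Longrightarrow> xs n \<in> Nset \<alpha>" using assms(8) by simp
    show "\<And>n m. 1 \<le> n \<Longrightarrow> 1 \<le> m \<Longrightarrow> \<alpha> powr (-3) \<le> pnorm p (Jop \<alpha> (\<alpha> ^ M) m (xs n))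
        \<and> pnorm p (Jop \<alpha> (\<alpha> ^ M) m (xs n)) \<le> 1"
      using J_bounds by blast
  qed (use assms in simp_all)
  have X: "(\<lambda>i. \<Sum>n=1..N. a n * xs n i) = comb a N" by (simp add: fun_eq_iff comb_def)
  have lower_const: "\<alpha> powr (-4 * p) \<le> \<alpha> powr (- p / q) * (\<alpha> powr (-3)) powr p"
    using \<alpha>_gt_1 by (simp add: p_div_q powr_powr powr_add[symmetric])
  have "2 * (1 + 2 * q) / \<alpha> powr (-3) = 2 * (1 + 2 * q) * \<alpha> ^ 3"
    using \<alpha>_pos by (simp add: powr_minus powr_numeral divide_inverse)
  also have "\<dots> \<le> 6 * (p + q) * \<alpha> ^ 4"
    using \<alpha>_gt_1 p_gt_1 q_gt_1 by (intro mult_mono[of "2 * (1 + 2 * q)"] power_increasing) auto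
  finally have upper_const: "2 * (1 + 2 * q) / \<alpha> powr (-3) \<le> 6 * (p + q) * \<alpha> ^ 4" .
  show ?thesis unfolding X
    using order_trans[OF mult_right_mono[OF lower_const pnorm_nonneg] pnorm_comb_le_prnorm]
      order_trans[OF prnorm_comb_le_pnorm mult_right_mono[OF upper_const pnorm_nonneg]]
    by blast
qed

end
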